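(* Let $q=2^t$. Let $r+I\in\ker\pi_{P_1}\cap C_k(P,L)$, let $r^*\in R_P^*$ be its representative, and write $r^*=(1+x_3^{q-1})h$ with $h\in R_P^*$ not involving $x_3$. Then $h$ is a $k$-linear combination of the constant $1$ and the $q$ monomials $g_0g_1^2g_2^4\cdots g_{t-1}^{2^{t-1}}$ with each $g_i\in\{x_1,x_2\}$.
   Context: Let $k=\mathbb{F}_q$, $q=2^t$, $V=k^4$ with coordinates $x_0,\dots,x_3$ relative to a symplectic basis $e_0,\dots,e_3$ of a nonsingular alternating form with $(e_0,e_3)=(e_1,e_2)=1$; $P$ the points (1-dim subspaces) and $L$ the totally isotropic 2-dim subspaces (lines). $R=k[x_0,\dots,x_3]$, $I=(x_i^q-x_i)_{i}$. $R_P^*$ is the $k$-span of monomials $x_0^{m_0}\cdots x_3^{m_3}$ with $0\le m_i\le q-1$ and $\sum m_i$ divisible by $q-1$; $R_P=\{f+I:f\in R_P^*\}$, identified with functions $P\to k$ by evaluation at nonzero vectors. For a line $\ell$, $\delta_\ell^*\in R_P^*$ is the polynomial representing the characteristic function of $\ell$, and $C_k(P,L)$ is the $k$-span of $\{\delta_\ell^*+I:\ell\in L\}$. $P_1$ is the set of points with $x_3$-coordinate nonzero and $\pi_{P_1}$ is restriction of functions to $P_1$. *)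

theory Defs
  imports Main
begin

text \<open>Vectors of V = k^4 are functions nat => k vanishing outside {0..3};
  monomials x0^m0...x3^m3 are exponent functions m :: nat => nat vanishing outside {0..3};
  a polynomial is its coefficient function (monomial => k).\<close>

definition Vec :: "(nat \<Rightarrow> 'k::field) set" where
  "Vec = {v. \<forall>i\<ge>4. v i = 0}"

definition Mon :: "nat \<Rightarrow> (nat \<Rightarrow> nat) set" where
  "Mon q = {m. (\<forall>i<4. m i < q) \<and> (\<forall>i\<ge>4. m i = 0)}"

text \<open>reduced polynomials: all exponents at most q-1 (unique representatives of R/I)\<close>
definition reduced :: "nat \<Rightarrow> ((nat \<Rightarrow> nat) \<Rightarrow> 'k::field) \<Rightarrow> bool" where
  "reduced q c \<longleftrightarrow> (\<forall>m. c m \<noteq> 0 \<longrightarrow> m \<in> Mon q)"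

definition RPstar :: "nat \<Rightarrow> ((nat \<Rightarrow> nat) \<Rightarrow> 'k::field) set" where
  "RPstar q = {c. reduced q c \<and> (\<forall>m. c m \<noteq> 0 \<longrightarrow> (q - 1) dvd (\<Sum>i<4. m i))}"

definition evalp :: "nat \<Rightarrow> ((nat \<Rightarrow> nat) \<Rightarrow> 'k::field) \<Rightarrow> (nat \<Rightarrow> 'k) \<Rightarrow> 'k" where
  "evalp q c v = (\<Sum>m\<in>Mon q. c m * (\<Prod>i<4. v i ^ m i))"

definition bform :: "(nat \<Rightarrow> 'k::field) \<Rightarrow> (nat \<Rightarrow> 'k) \<Rightarrow> 'k" where
  "bform u w = u 0 * w 3 - u 3 * w 0 + u 1 * w 2 - u 2 * w 1"

definition span2 :: "(nat \<Rightarrow> 'k::field) \<Rightarrow> (nat \<Rightarrow> 'k) \<Rightarrow> (nat \<Rightarrow> 'k) set" where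
  "span2 u w = {(\<lambda>i. a * u i + b * w i) | a b. True}"

text \<open>L: totally isotropic 2-dimensional subspaces\<close>
definition Lines :: "(nat \<Rightarrow> 'k::field) set set" where
  "Lines = {span2 u w | u w. u \<in> Vec \<and> w \<in> Vec \<and> u \<noteq> (\<lambda>i. 0)
             \<and> (\<forall>c. w \<noteq> (\<lambda>i. c * u i)) \<and> bform u w = 0}"

definition deltastar :: "nat \<Rightarrow> (nat \<Rightarrow> 'k::field) set \<Rightarrow> ((nat \<Rightarrow> nat) \<Rightarrow> 'k)" where
  "deltastar q l = (THE c. reduced q c \<and>
      (\<forall>v\<in>Vec. evalp q c v = (if v \<in> l then 1 else 0)))"

text \<open>coefficients of the product (1 + x3^(q-1)) * h in R\<close>
definition mult_x3 :: "nat \<Rightarrow> ((nat \<Rightarrow> nat) \<Rightarrow> 'k::field) \<Rightarrow> ((nat \<Rightarrow> nat) \<Rightarrow> 'k)" where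
  "mult_x3 q h = (\<lambda>m. h m + (if q - 1 \<le> m 3 then h (m(3 := m 3 - (q - 1))) else 0))"

text \<open>exponent vector of g_0 g_1^2 ... g_{t-1}^(2^(t-1)), where g i \<in> {1,2} means g_i = x_(g i)\<close>
definition gmon :: "nat \<Rightarrow> (nat \<Rightarrow> nat) \<Rightarrow> (nat \<Rightarrow> nat)" where
  "gmon t g = (\<lambda>j. \<Sum>i<t. if g i = j then 2 ^ i else 0)"

definition gmons :: "nat \<Rightarrow> (nat \<Rightarrow> nat) set" where
  "gmons t = {gmon t g | g. \<forall>i<t. g i \<in> {1, 2}}"

end

theory Submission
  imports Defs
    "HOL-Computational_Algebra.Polynomial"
    "HOL-Library.Disjoint_Sets"
    "HOL-Library.FuncSet"
    "HOL-Library.Product_Plus"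
begin

text \<open>
  Call a function on \<open>V\<close> isotropically additive if it is additive along every totally
  isotropic line.  For two such functions \<open>A, B\<close>, the map \<open>(A, B)\<close> restricted to a line is
  additive on \<open>k\<^sup>2\<close>, so all its fibres have the same size modulo 2.  Hence the function \<open>F\<close>
  given by \<open>r\<close>, a combination of characteristic functions of lines, has the same sum over all
  fibres of \<open>(A, B)\<close>.  Now \<open>F\<close> vanishes off \<open>x\<^sub>3 = 0\<close>, equals \<open>h\<close> there and is invariant under
  scalars.  Choosing \<open>A, B\<close> among linear forms, squares of linear forms and the quadratic form
  \<open>x\<^sub>0x\<^sub>3 + x\<^sub>1x\<^sub>2\<close>, whose fibres in \<open>x\<^sub>3 = 0\<close> are explicit lines, we find that \<open>h\<close> does not
  depend on \<open>x\<^sub>0\<close> and sums to zero over the plane \<open>x\<^sub>0 = x\<^sub>3 = 0\<close>.  Since reduced polynomials are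
  determined by their values, \<open>h\<close> involves neither \<open>x\<^sub>0\<close> nor \<open>x\<^sub>1\<^sup>q\<^sup>-\<^sup>1x\<^sub>2\<^sup>q\<^sup>-\<^sup>1\<close>; degree bookkeeping and
  binary expansion leave exactly \<open>1\<close> and the monomials \<open>x\<^sub>1\<^sup>a x\<^sub>2\<^sup>q\<^sup>-\<^sup>1\<^sup>-\<^sup>a\<close> = \<open>g\<^sub>0 g\<^sub>1\<^sup>2 \<cdots>\<close>.
\<close>

section \<open>Finite fields\<close>

locale finite_field =
  fixes q :: nat and field_type :: "'k::field itself"
  assumes finite_UNIV_field: "finite (UNIV :: 'k set)"
    and card_UNIV_field: "card (UNIV :: 'k set) = q"
begin

lemma card_ge_2: "q \<ge> 2"
proof -
  have "card {0::'k, 1} \<le> card (UNIV :: 'k set)"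
    by (rule card_mono[OF finite_UNIV_field]) auto
  thus ?thesis using card_UNIV_field by simp
qed

text \<open>The translation \<open>x \<mapsto> x + 1\<close> permutes the field, so summing it gives \<open>q \<cdot> 1 = 0\<close>.\<close>
lemma of_nat_card_eq_0: "(of_nat q :: 'k) = 0"
proof -
  have "(\<Sum>x\<in>UNIV. x + 1) = (\<Sum>x\<in>(UNIV :: 'k set). x)"
    by (rule sum.reindex_bij_witness[where j = "\<lambda>x. x + 1" and i = "\<lambda>x. x - 1"]) auto
  thus ?thesis using card_UNIV_field by (simp add: sum.distrib)
qed

lemma of_nat_card_minus_1: "(of_nat (q - 1) :: 'k) = - 1"
  using card_ge_2 of_nat_card_eq_0 by simp

text \<open>Fermat's little theorem for \<open>k\<close>: multiplication by \<open>x \<noteq> 0\<close> permutes \<open>k\<^sup>*\<close>.\<close>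
lemma power_card_minus_1:
  assumes x: "x \<noteq> 0"
  shows "x ^ (q - 1) = (1 :: 'k)"
proof -
  let ?U = "UNIV - {0 :: 'k}"
  have "(\<Prod>y\<in>?U. x * y) = (\<Prod>y\<in>?U. y)"
    by (rule prod.reindex_bij_witness[where j = "\<lambda>y. x * y" and i = "\<lambda>y. y / x"]) (use x in auto)
  moreover have "(\<Prod>y\<in>?U. x * y) = x ^ card ?U * (\<Prod>y\<in>?U. y)"
    by (simp add: prod.distrib)
  moreover have "(\<Prod>y\<in>?U. y) \<noteq> 0"
    using finite_UNIV_field by simp
  moreover have "card ?U = q - 1"
    using card_UNIV_field finite_UNIV_field by (simp add: card_Diff_singleton)
  ultimately show ?thesis by simp
qed

text \<open>A polynomial of degree \<open>e < q - 1\<close> cannot vanish on all of \<open>k\<^sup>*\<close>.\<close>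
lemma exists_non_root_of_unity:
  assumes "0 < e" "e < q - 1"
  shows "\<exists>a::'k. a \<noteq> 0 \<and> a ^ e \<noteq> 1"
proof (rule ccontr)
  assume "\<not> ?thesis"
  hence all: "a ^ e = 1" if "a \<noteq> 0" for a :: 'k using that by blast
  define p :: "'k poly" where "p = [:-1:] + monom 1 e"
  have deg: "degree p = e"
    unfolding p_def using assms by (subst degree_add_eq_right) (auto simp: degree_monom_eq)
  hence "p \<noteq> 0" using assms by auto
  have "UNIV - {0 :: 'k} \<subseteq> {x. poly p x = 0}"
    using all by (auto simp: p_def poly_monom)
  hence "card (UNIV - {0 :: 'k}) \<le> card {x. poly p x = 0}"
    by (intro card_mono) (auto intro: poly_roots_finite simp: \<open>p \<noteq> 0\<close>)
  also have "\<dots> \<le> e"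
    using card_poly_roots_bound[OF \<open>p \<noteq> 0\<close>] deg by simp
  finally show False
    using assms card_UNIV_field finite_UNIV_field by (simp add: card_Diff_singleton)
qed

end

text \<open>The value of the power sum \<open>\<Sum>\<^sub>x\<^sub>\<in>\<^sub>k x\<^sup>e\<close> over a field of order \<open>q\<close>.\<close>
definition psum :: "nat \<Rightarrow> nat \<Rightarrow> 'k::field" where
  "psum q e = (if 0 < e \<and> (q - 1) dvd e then - 1 else 0)"

context finite_field
begin

text \<open>If \<open>q - 1\<close> does not divide \<open>e\<close>, some \<open>a\<close> has \<open>a\<^sup>e \<noteq> 1\<close>, and the power sum is invariant
  under the substitution \<open>x \<mapsto> a x\<close>; so it vanishes.\<close>
lemma sum_powers_not_dvd:
  assumes "\<not> (q - 1) dvd e"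
  shows "(\<Sum>x\<in>UNIV. (x::'k) ^ e) = 0"
proof -
  have r: "0 < e mod (q - 1)" "e mod (q - 1) < q - 1"
    using assms card_ge_2 by (auto simp: mod_eq_0_iff_dvd[symmetric])
  obtain a :: 'k where a: "a \<noteq> 0" "a ^ (e mod (q - 1)) \<noteq> 1"
    using exists_non_root_of_unity[OF r] by blast
  have "a ^ e = (a ^ (q - 1)) ^ (e div (q - 1)) * a ^ (e mod (q - 1))"
    unfolding power_mult[symmetric] power_add[symmetric] by simp
  hence ae: "a ^ e \<noteq> 1" using a power_card_minus_1[OF a(1)] by simp
  let ?S = "\<Sum>x\<in>UNIV. (x::'k) ^ e"
  have "?S = (\<Sum>x\<in>UNIV. (a * x) ^ e)"
    by (rule sum.reindex_bij_witness[where i = "\<lambda>x. a * x" and j = "\<lambda>y. y / a"]) (use a in auto)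
  also have "\<dots> = a ^ e * ?S"
    by (simp add: power_mult_distrib sum_distrib_left)
  finally have "(1 - a ^ e) * ?S = 0" by (simp add: algebra_simps)
  thus ?thesis using ae by simp
qed

lemma sum_powers: "(\<Sum>x\<in>UNIV. (x::'k) ^ e) = psum q e"
proof (cases "e = 0")
  case True
  thus ?thesis using of_nat_card_eq_0 card_UNIV_field by (simp add: psum_def)
next
  case e: False
  show ?thesis
  proof (cases "(q - 1) dvd e")
    case True
    then obtain c where c: "e = (q - 1) * c" by blast
    have "(\<Sum>x\<in>UNIV. (x::'k) ^ e) = (\<Sum>x\<in>insert 0 (UNIV - {0 :: 'k}). x ^ e)"
      by (simp add: insert_absorb)
    also have "\<dots> = (\<Sum>x\<in>UNIV - {0 :: 'k}. x ^ e)"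
      using finite_UNIV_field e by (subst sum.insert) auto
    also have "\<dots> = (\<Sum>x\<in>UNIV - {0 :: 'k}. 1)"
      by (rule sum.cong) (auto simp: c power_mult power_card_minus_1[simplified])
    also have "\<dots> = of_nat (q - 1)"
      using card_UNIV_field finite_UNIV_field by (simp add: card_Diff_singleton)
    finally show ?thesis using True e of_nat_card_minus_1 by (simp add: psum_def)
  qed (simp add: sum_powers_not_dvd psum_def)
qed

end

section \<open>Reduced polynomials and their values\<close>

definition mon_eval :: "(nat \<Rightarrow> nat) \<Rightarrow> (nat \<Rightarrow> 'k::field) \<Rightarrow> 'k" where
  "mon_eval m v = (\<Prod>i<4. v i ^ m i)"

lemma evalp_mon_eval: "evalp q c v = (\<Sum>m\<in>Mon q. c m * mon_eval m v)"
  by (simp add: evalp_def mon_eval_def)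

lemma mon_eval_4: "mon_eval m v = v 0 ^ m 0 * v 1 ^ m 1 * v 2 ^ m 2 * v 3 ^ m 3"
  by (simp add: mon_eval_def eval_nat_numeral mult_ac)

definition Pi_dflt :: "'a set \<Rightarrow> 'b \<Rightarrow> ('a \<Rightarrow> 'b set) \<Rightarrow> ('a \<Rightarrow> 'b) set" where
  "Pi_dflt A d B = {f. (\<forall>x\<in>A. f x \<in> B x) \<and> (\<forall>x. x \<notin> A \<longrightarrow> f x = d)}"

lemma Pi_dflt_eq_image_PiE:
  "Pi_dflt A d B = (\<lambda>g x. if x \<in> A then g x else d) ` PiE A B"
proof (intro equalityI subsetI)
  fix f assume "f \<in> Pi_dflt A d B"
  hence "f = (\<lambda>x. if x \<in> A then restrict f A x else d)" "restrict f A \<in> PiE A B"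
    by (auto simp: Pi_dflt_def fun_eq_iff)
  thus "f \<in> (\<lambda>g x. if x \<in> A then g x else d) ` PiE A B" by blast
qed (auto simp: Pi_dflt_def)

lemma inj_on_extend_PiE: "inj_on (\<lambda>g x. if x \<in> A then g x else d) (PiE A B)"
  by (auto simp: inj_on_def fun_eq_iff PiE_def extensional_def) metis

lemma finite_Pi_dflt:
  "finite A \<Longrightarrow> (\<And>x. x \<in> A \<Longrightarrow> finite (B x)) \<Longrightarrow> finite (Pi_dflt A d B)"
  unfolding Pi_dflt_eq_image_PiE by (intro finite_imageI finite_PiE)

lemma card_Pi_dflt:
  "finite A \<Longrightarrow> card (Pi_dflt A d B) = (\<Prod>x\<in>A. card (B x))"
  unfolding Pi_dflt_eq_image_PiE by (simp add: card_image[OF inj_on_extend_PiE] card_PiE)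

lemma sum_Pi_dflt_prod:
  fixes f :: "'a \<Rightarrow> 'b \<Rightarrow> 'c::comm_semiring_1"
  assumes "finite A" "\<And>x. x \<in> A \<Longrightarrow> finite (B x)"
  shows "(\<Sum>g\<in>Pi_dflt A d B. \<Prod>x\<in>A. f x (g x)) = (\<Prod>x\<in>A. \<Sum>y\<in>B x. f x y)"
proof -
  have "(\<Sum>g\<in>Pi_dflt A d B. \<Prod>x\<in>A. f x (g x))
      = (\<Sum>g\<in>PiE A B. \<Prod>x\<in>A. f x (if x \<in> A then g x else d))"
    unfolding Pi_dflt_eq_image_PiE by (simp add: sum.reindex[OF inj_on_extend_PiE])
  also have "\<dots> = (\<Sum>g\<in>PiE A B. \<Prod>x\<in>A. f x (g x))"
    by (intro sum.cong prod.cong) auto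
  also have "\<dots> = (\<Prod>x\<in>A. \<Sum>y\<in>B x. f x y)"
    by (rule prod_sum_PiE[symmetric]) (use assms in auto)
  finally show ?thesis .
qed

lemma Mon_eq_Pi_dflt: "Mon q = Pi_dflt {..<4} 0 (\<lambda>_. {..<q})"
  by (auto simp: Mon_def Pi_dflt_def not_less)

lemma Vec_eq_Pi_dflt: "Vec = Pi_dflt {..<4} 0 (\<lambda>_. UNIV)"
  by (auto simp: Vec_def Pi_dflt_def not_less)

lemma finite_Mon: "finite (Mon q)" and card_Mon: "card (Mon q) = q ^ 4"
  unfolding Mon_eq_Pi_dflt by (auto intro: finite_Pi_dflt simp: card_Pi_dflt)

lemma evalp_diff: "evalp q (\<lambda>m. c m - c' m) v = evalp q c v - evalp q c' v"
  by (simp add: evalp_def sum_subtractf left_diff_distrib)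

lemma evalp_linear_combination:
  "evalp q (\<lambda>m. \<Sum>l\<in>L. a l * d l m) v = (\<Sum>l\<in>L. a l * evalp q (d l) v)"
  unfolding evalp_def by (simp add: sum_distrib_left sum_distrib_right mult_ac) (rule sum.swap)

context finite_field
begin

lemma finite_Vec: "finite (Vec :: (nat \<Rightarrow> 'k) set)"
  and card_Vec: "card (Vec :: (nat \<Rightarrow> 'k) set) = q ^ 4"
  unfolding Vec_eq_Pi_dflt using finite_UNIV_field card_UNIV_field
  by (auto intro: finite_Pi_dflt simp: card_Pi_dflt)

lemma sum_Vec_mon_eval: "(\<Sum>v\<in>Vec. mon_eval e (v :: nat \<Rightarrow> 'k)) = (\<Prod>i<4. psum q (e i))"
  unfolding mon_eval_def Vec_eq_Pi_dflt
  using sum_Pi_dflt_prod[of "{..<4}" "\<lambda>_. UNIV :: 'k set" "\<lambda>i x. x ^ e i" 0]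
  by (simp add: finite_UNIV_field sum_powers)

lemma sum_Vec_mon_eval_evalp:
  "(\<Sum>v\<in>Vec. mon_eval m' v * evalp q c (v :: nat \<Rightarrow> 'k))
     = (\<Sum>m\<in>Mon q. c m * (\<Prod>i<4. psum q (m' i + m i)))"
proof -
  have "(\<Sum>v\<in>Vec. mon_eval m' v * evalp q c (v :: nat \<Rightarrow> 'k))
      = (\<Sum>v\<in>Vec. \<Sum>m\<in>Mon q. c m * mon_eval (\<lambda>i. m' i + m i) v)"
    by (simp add: evalp_mon_eval sum_distrib_left mon_eval_def prod.distrib[symmetric]
        power_add mult_ac)
  also have "\<dots> = (\<Sum>m\<in>Mon q. c m * (\<Sum>v\<in>Vec. mon_eval (\<lambda>i. m' i + m i) (v :: nat \<Rightarrow> 'k)))"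
    by (subst sum.swap) (simp add: sum_distrib_left)
  finally show ?thesis by (simp add: sum_Vec_mon_eval)
qed

lemma psum_le_twice:
  assumes "e \<le> 2 * (q - 1)"
  shows "psum q e = (if e = q - 1 \<or> e = 2 * (q - 1) then - 1 else (0 :: 'k))"
proof -
  have "(0 < e \<and> (q - 1) dvd e) \<longleftrightarrow> (e = q - 1 \<or> e = 2 * (q - 1))"
  proof
    assume "0 < e \<and> (q - 1) dvd e"
    then obtain j where j: "e = (q - 1) * j" "0 < j" by auto
    have "(q - 1) * j \<le> (q - 1) * 2" using assms j by (simp add: mult.commute)
    hence "j \<le> 2" using card_ge_2 by simp
    thus "e = q - 1 \<or> e = 2 * (q - 1)" using j by (auto simp: le_Suc_eq)
  qed (use card_ge_2 in auto)
  thus ?thesis by (simp add: psum_def)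
qed

text \<open>Pairing with the complementary monomial \<open>x\<^sup>q\<^sup>-\<^sup>1\<^sup>-\<^sup>m\<^sub>0\<close> detects the coefficient of \<open>x\<^sup>m\<^sup>0\<close>, up to
  reduced monomials of strictly larger total degree.\<close>
lemma psum_complement:
  assumes "m0 \<in> Mon q" "m \<in> Mon q" "i < 4"
  shows "psum q ((q - 1 - m0 i) + m i)
           = (if m i = m0 i \<or> (m i = q - 1 \<and> m0 i = 0) then - 1 else (0 :: 'k))"
proof -
  have "m i \<le> q - 1" "m0 i \<le> q - 1" using assms by (auto simp: Mon_def)
  thus ?thesis using card_ge_2 by (subst psum_le_twice) (auto split: if_splits)
qed

lemma raised_exponents_degree:
  assumes m0: "m0 \<in> Mon q" and m: "m \<in> Mon q" "m \<noteq> m0"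
    and raised: "\<forall>i<4. m i = m0 i \<or> (m i = q - 1 \<and> m0 i = 0)"
  shows "(\<Sum>i<4. m0 i) < (\<Sum>i<4. m i)"
proof -
  obtain j where j: "m j \<noteq> m0 j" using m by (auto simp: fun_eq_iff)
  have "j < 4" using j m m0 by (rule_tac ccontr) (auto simp: Mon_def)
  have le: "\<forall>i\<in>{..<4}. m0 i \<le> m i" using raised by auto
  have "m0 j < m j" using raised j \<open>j < 4\<close> card_ge_2 by force
  thus ?thesis using sum_strict_mono_ex1[OF _ le] \<open>j < 4\<close> by blast
qed

text \<open>A reduced polynomial vanishing on \<open>V\<close> is zero; induction on the total degree,
  downwards from the top monomial.\<close>
lemma reduced_vanishing_eq_0:
  fixes c :: "(nat \<Rightarrow> nat) \<Rightarrow> 'k"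
  assumes red: "reduced q c" and vanish: "\<forall>v\<in>Vec. evalp q c v = 0"
  shows "c m0 = 0"
proof (induction m0 rule: measure_induct_rule[where f = "\<lambda>m. 4 * (q - 1) - sum m {..<4}"])
  case (less m0)
  show ?case
  proof (cases "m0 \<in> Mon q")
    case False thus ?thesis using red by (auto simp: reduced_def)
  next
    case m0: True
    define m' where "m' = (\<lambda>i. q - 1 - m0 i)"
    define W where "W = (\<lambda>m. (\<Prod>i<4. psum q (m' i + m i) :: 'k))"
    have "W m0 \<noteq> 0" using psum_complement[OF m0 m0] by (simp add: W_def m'_def)
    have others: "c m * W m = 0" if m: "m \<in> Mon q - {m0}" for m
    proof (cases "\<forall>i<4. m i = m0 i \<or> (m i = q - 1 \<and> m0 i = 0)")
      case False
      then obtain i where "i < 4" "\<not> (m i = m0 i \<or> (m i = q - 1 \<and> m0 i = 0))" by blast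
      hence "W m = 0" using m psum_complement[OF m0]
        by (auto simp: W_def m'_def intro!: prod_zero)
      thus ?thesis by simp
    next
      case True
      hence "(\<Sum>i<4. m0 i) < (\<Sum>i<4. m i)"
        using raised_exponents_degree[OF m0] m by blast
      moreover have "(\<Sum>i<4. m i) \<le> (\<Sum>i<(4::nat). q - 1)"
        by (rule sum_mono) (use m in \<open>auto simp: Mon_def less_Suc_eq_le[symmetric]\<close>)
      ultimately have "c m = 0" by (intro less.IH) simp
      thus ?thesis by simp
    qed
    have "0 = (\<Sum>v\<in>Vec. mon_eval m' v * evalp q c v)" using vanish by simp
    also have "\<dots> = (\<Sum>m\<in>Mon q. c m * W m)" unfolding W_def by (rule sum_Vec_mon_eval_evalp)
    also have "\<dots> = c m0 * W m0 + (\<Sum>m\<in>Mon q - {m0}. c m * W m)"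
      using finite_Mon m0 by (subst sum.remove) auto
    also have "\<dots> = c m0 * W m0" using others by (subst sum.neutral) auto
    finally show ?thesis using \<open>W m0 \<noteq> 0\<close> by simp
  qed
qed

lemma reduced_eval_inj:
  fixes c c' :: "(nat \<Rightarrow> nat) \<Rightarrow> 'k"
  assumes "reduced q c" "reduced q c'" "\<forall>v\<in>Vec. evalp q c v = evalp q c' v"
  shows "c = c'"
proof
  fix m
  have "reduced q (\<lambda>m. c m - c' m)" using assms(1,2) by (auto simp: reduced_def) metis
  moreover have "\<forall>v\<in>Vec. evalp q (\<lambda>m. c m - c' m) v = 0" using assms(3) by (simp add: evalp_diff)
  ultimately show "c m = c' m" using reduced_vanishing_eq_0 by fastforce
qed

text \<open>Every function \<open>V \<rightarrow> k\<close> is the evaluation of a reduced polynomial: both spaces have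
  \<open>q\<^sup>q\<^sup>\<^sup>4\<close> elements and evaluation is injective.\<close>
lemma reduced_eval_surj:
  fixes f :: "(nat \<Rightarrow> 'k) \<Rightarrow> 'k"
  shows "\<exists>c. reduced q c \<and> (\<forall>v\<in>Vec. evalp q c v = f v)"
proof -
  define RR where "RR = Pi_dflt (Mon q) 0 (\<lambda>_. UNIV :: 'k set)"
  define FF where "FF = Pi_dflt (Vec :: (nat \<Rightarrow> 'k) set) 0 (\<lambda>_. UNIV :: 'k set)"
  define E where "E = (\<lambda>c v. if v \<in> Vec then evalp q c v else (0::'k))"
  have reduced_RR: "reduced q c \<longleftrightarrow> c \<in> RR" for c by (auto simp: reduced_def RR_def Pi_dflt_def)
  have "inj_on E RR"
  proof (rule inj_onI)
    fix c c' assume c: "c \<in> RR" "c' \<in> RR" and eq: "E c = E c'"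
    have same: "\<forall>v\<in>Vec. evalp q c v = evalp q c' v"
      using eq by (simp add: E_def fun_eq_iff) metis
    show "c = c'" using c same by (intro reduced_eval_inj) (auto simp: reduced_RR)
  qed
  hence "card (E ` RR) = card FF"
    using finite_Mon finite_Vec
    by (simp add: card_image RR_def FF_def card_Pi_dflt card_Vec card_Mon card_UNIV_field)
  moreover have "finite FF"
    unfolding FF_def using finite_Vec finite_UNIV_field by (rule finite_Pi_dflt)
  moreover have "E ` RR \<subseteq> FF" by (auto simp: E_def FF_def Pi_dflt_def)
  ultimately have "E ` RR = FF" by (intro card_subset_eq)
  moreover have "(\<lambda>v. if v \<in> Vec then f v else 0) \<in> FF" by (auto simp: FF_def Pi_dflt_def)
  ultimately have "(\<lambda>v. if v \<in> Vec then f v else 0) \<in> E ` RR" by simp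
  then obtain c where c: "c \<in> RR" and Ec: "(\<lambda>v. if v \<in> Vec then f v else 0) = E c" ..
  have "evalp q c v = f v" if "v \<in> Vec" for v
    using fun_cong[OF Ec, of v] that by (simp add: E_def)
  thus ?thesis using c reduced_RR by blast
qed

lemma deltastar_spec:
  "reduced q (deltastar q l :: (nat \<Rightarrow> nat) \<Rightarrow> 'k)"
  "v \<in> Vec \<Longrightarrow> evalp q (deltastar q l) v = (if v \<in> l then (1::'k) else 0)"
proof -
  let ?P = "\<lambda>c :: (nat \<Rightarrow> nat) \<Rightarrow> 'k. reduced q c \<and> (\<forall>v\<in>Vec. evalp q c v = (if v \<in> l then 1 else 0))"
  obtain c where "?P c" using reduced_eval_surj[of "\<lambda>v. if v \<in> l then 1 else 0"] by blast
  moreover have "c' = c" if "?P c'" for c'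
    using reduced_eval_inj[of c' c] that \<open>?P c\<close> by auto
  ultimately have "\<exists>!c. ?P c" by blast
  hence "?P (deltastar q l)" unfolding deltastar_def by (rule theI')
  thus "reduced q (deltastar q l :: (nat \<Rightarrow> nat) \<Rightarrow> 'k)"
    "v \<in> Vec \<Longrightarrow> evalp q (deltastar q l) v = (if v \<in> l then (1::'k) else 0)" by auto
qed

end

section \<open>Fields of characteristic two\<close>

locale binary_field = finite_field q field_type for q and field_type :: "'k::field itself" +
  fixes t :: nat
  assumes card_pow2: "q = 2 ^ t"
begin

lemma two_eq_0: "(2 :: 'k) = 0"
proof -
  have "(2 :: 'k) ^ t = 0" using of_nat_card_eq_0 card_pow2 by simp
  thus ?thesis by simp
qed

lemma add_self [simp]: "(x :: 'k) + x = 0"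
  using two_eq_0 by (metis mult_2 mult_zero_left)

lemma add_self_left [simp]: "(x :: 'k) + (x + y) = y"
  by (simp flip: add.assoc)

lemma minus_eq_self [simp]: "- (x :: 'k) = x"
  by (rule minus_unique) simp

lemma diff_eq_add: "(x :: 'k) - y = x + y"
  by (simp add: diff_conv_add_uminus)

lemma add_eq_0_iff_eq: "(x :: 'k) + y = 0 \<longleftrightarrow> x = y"
  by (metis add_self add_right_cancel)

lemma of_nat_card_minus_1_eq_1: "(of_nat (q - 1) :: 'k) = 1"
  using of_nat_card_minus_1 by simp

text \<open>The Frobenius map \<open>x \<mapsto> x\<^sup>2\<close> is additive, hence injective, hence surjective.\<close>
lemma square_add: "((x :: 'k) + y) ^ 2 = x ^ 2 + y ^ 2"
  by (simp add: power2_sum two_eq_0)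

lemma exists_sqrt: "\<exists>s :: 'k. s * s = x"
proof -
  have "inj (\<lambda>s :: 'k. s * s)"
  proof (rule injI)
    fix a b :: 'k assume "a * a = b * b"
    have "(a + b) ^ 2 = a ^ 2 + b ^ 2" by (rule square_add)
    also have "\<dots> = 0" using \<open>a * a = b * b\<close> by (simp add: power2_eq_square)
    finally show "a = b" by (simp add: add_eq_0_iff_eq)
  qed
  hence "surj (\<lambda>s :: 'k. s * s)" using finite_UNIV_inj_surj[OF finite_UNIV_field] by blast
  thus ?thesis by (metis surjD)
qed

text \<open>Parity of fibres: for an additive map \<open>\<psi> : k\<^sup>2 \<rightarrow> k\<^sup>2\<close> all fibres have the same
  cardinality modulo 2.  If \<open>\<psi>\<close> is injective every fibre is a singleton; otherwise a nonzero
  \<open>d\<close> in the kernel makes \<open>p \<mapsto> p + d\<close> a fixed-point-free involution of every fibre.\<close>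
lemma card_fibres_additive:
  fixes \<psi> :: "'k \<times> 'k \<Rightarrow> 'k \<times> 'k"
  assumes add: "\<And>p p'. \<psi> (p + p') = \<psi> p + \<psi> p'"
  shows "(of_nat (card (\<psi> -` {z})) :: 'k) = of_nat (card (\<psi> -` {z'}))"
proof (cases "inj \<psi>")
  case True
  have fin: "finite (UNIV :: ('k \<times> 'k) set)"
    using finite_UNIV_field by (intro finite_Prod_UNIV)
  have "card (\<psi> -` {z}) = 1" for z
  proof -
    have "surj \<psi>" using finite_UNIV_inj_surj[OF fin True] .
    then obtain p where "\<psi> p = z" by (metis surjD)
    have "\<psi> -` {z} = {p}"
    proof (intro set_eqI iffI)
      fix p' assume "p' \<in> \<psi> -` {z}"
      hence "\<psi> p' = \<psi> p" using \<open>\<psi> p = z\<close> by simp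
      thus "p' \<in> {p}" using True by (simp add: inj_eq)
    qed (use \<open>\<psi> p = z\<close> in simp)
    thus ?thesis by simp
  qed
  thus ?thesis by simp
next
  case False
  then obtain x y where "x \<noteq> y" "\<psi> x = \<psi> y" unfolding inj_def by blast
  define d where "d = x - y"
  have "x = d + y" by (simp add: d_def)
  hence "\<psi> x = \<psi> d + \<psi> y" using add by simp
  hence kernel: "\<psi> d = 0" using \<open>\<psi> x = \<psi> y\<close> by simp
  have "d \<noteq> 0" using \<open>x \<noteq> y\<close> by (simp add: d_def)
  have even: "(of_nat (card (\<psi> -` {z})) :: 'k) = 0" for z
  proof -
    have "(\<Sum>p\<in>\<psi> -` {z}. (1 :: 'k)) = 0"
    proof (rule sum_involution_eq_0[where h = "\<lambda>p. p + d"])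
      fix p assume "p \<in> \<psi> -` {z}"
      thus "p + d \<in> \<psi> -` {z}" using kernel add by simp
      show "p + d + d = p" by (cases p, cases d) (simp add: add.assoc)
      show "p + d \<noteq> p" using \<open>d \<noteq> 0\<close> by simp
    qed simp
    thus ?thesis by simp
  qed
  show ?thesis by (simp add: even)
qed

end

section \<open>Totally isotropic lines and functions additive along them\<close>

definition iso_additive :: "((nat \<Rightarrow> 'k::field) \<Rightarrow> 'k) \<Rightarrow> bool" where
  "iso_additive A \<longleftrightarrow> (\<forall>u w a b a' b'. bform u w = 0 \<longrightarrow>
     A (\<lambda>i. (a + a') * u i + (b + b') * w i) = A (\<lambda>i. a * u i + b * w i) + A (\<lambda>i. a' * u i + b' * w i))"

lemma iso_additive_coordinate: "iso_additive (\<lambda>v. v i)"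
  by (simp add: iso_additive_def algebra_simps)

lemma iso_additive_add:
  "iso_additive A \<Longrightarrow> iso_additive B \<Longrightarrow> iso_additive (\<lambda>v. A v + B v)"
  by (simp add: iso_additive_def)

lemma iso_additive_scale: "iso_additive A \<Longrightarrow> iso_additive (\<lambda>v. c * A v)"
  by (simp add: iso_additive_def algebra_simps)

text \<open>The quadratic form \<open>x\<^sub>0x\<^sub>3 + x\<^sub>1x\<^sub>2\<close> whose polarisation is the alternating form.\<close>
definition quadform :: "(nat \<Rightarrow> 'k::field) \<Rightarrow> 'k" where
  "quadform v = v 0 * v 3 + v 1 * v 2"

lemma bform_span2:
  "bform (\<lambda>i. a * u i + b * w i) (\<lambda>i. a' * u i + b' * w i) = (a * b' - b * a') * bform u w"
  by (simp add: bform_def algebra_simps)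

context binary_field
begin

lemma quadform_add:
  "quadform (\<lambda>i. x i + y i) = quadform x + quadform y + bform x (y :: nat \<Rightarrow> 'k)"
  by (simp add: quadform_def bform_def diff_eq_add algebra_simps)

lemma iso_additive_quadform: "iso_additive (quadform :: (nat \<Rightarrow> 'k) \<Rightarrow> 'k)"
  unfolding iso_additive_def
proof (intro allI impI)
  fix u w :: "nat \<Rightarrow> 'k" and a b a' b' :: 'k assume "bform u w = 0"
  have "(\<lambda>i. (a + a') * u i + (b + b') * w i) = (\<lambda>i. (a * u i + b * w i) + (a' * u i + b' * w i))"
    by (simp add: algebra_simps)
  thus "quadform (\<lambda>i. (a + a') * u i + (b + b') * w i)
      = quadform (\<lambda>i. a * u i + b * w i) + quadform (\<lambda>i. a' * u i + b' * w i)"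
    using \<open>bform u w = 0\<close> by (simp add: quadform_add bform_span2)
qed

lemma iso_additive_square: "iso_additive A \<Longrightarrow> iso_additive (\<lambda>v. (A v :: 'k) ^ 2)"
  by (simp add: iso_additive_def square_add)

end

lemmas (in binary_field) iso_additive_intros =
  iso_additive_coordinate iso_additive_add iso_additive_scale
  iso_additive_quadform iso_additive_square

lemma Lines_subset_Vec: "l \<in> Lines \<Longrightarrow> l \<subseteq> (Vec :: (nat \<Rightarrow> 'k::field) set)"
  by (auto simp: Lines_def span2_def Vec_def)

lemma span2_bij:
  fixes u w :: "nat \<Rightarrow> 'k::field"
  assumes u: "u \<noteq> (\<lambda>i. 0)" and w: "\<forall>c. w \<noteq> (\<lambda>i. c * u i)"
  shows "bij_betw (\<lambda>p i. fst p * u i + snd p * w i) UNIV (span2 u w)"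
proof (rule bij_betw_imageI)
  show "inj (\<lambda>p i. fst p * u i + snd p * w i)"
  proof (rule injI, clarsimp simp: fun_eq_iff)
    fix a b a' b' :: 'k
    assume eq: "\<forall>i. a * u i + b * w i = a' * u i + b' * w i"
    hence e: "(a - a') * u i = (b' - b) * w i" for i by (simp add: algebra_simps)
    have "b = b'"
    proof (rule ccontr)
      assume "b \<noteq> b'"
      hence "w = (\<lambda>i. ((a - a') / (b' - b)) * u i)" using e by (auto simp: fun_eq_iff field_simps)
      thus False using w by blast
    qed
    moreover have "a = a'"
    proof (rule ccontr)
      assume "a \<noteq> a'"
      hence "u = (\<lambda>i. 0)" using e \<open>b = b'\<close> by (auto simp: fun_eq_iff)
      thus False using u by blast
    qed
    ultimately show "a = a' \<and> b = b'" by simp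
  qed
  show "range (\<lambda>p i. fst p * u i + snd p * w i) = span2 u w"
    by (auto simp: span2_def image_def)
qed

context binary_field
begin

lemma card_line_fibres:
  fixes A B :: "(nat \<Rightarrow> 'k) \<Rightarrow> 'k"
  assumes l: "l \<in> Lines" and A: "iso_additive A" and B: "iso_additive B"
  shows "(of_nat (card {v\<in>l. A v = \<alpha> \<and> B v = \<beta>}) :: 'k)
       = of_nat (card {v\<in>l. A v = \<alpha>' \<and> B v = \<beta>'})"
proof -
  obtain u w where uw: "l = span2 u w" "u \<noteq> (\<lambda>i. 0)" "\<forall>c. w \<noteq> (\<lambda>i. c * u i)" "bform u w = 0"
    using l unfolding Lines_def by blast
  define par where "par = (\<lambda>(p :: 'k \<times> 'k) i. fst p * u i + snd p * w i)"
  define \<psi> where "\<psi> = (\<lambda>p. (A (par p), B (par p)))"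
  have bij: "bij_betw par UNIV l" using span2_bij[OF uw(2,3)] uw(1) by (simp add: par_def)
  have fibre: "card {v\<in>l. A v = \<alpha> \<and> B v = \<beta>} = card (\<psi> -` {(\<alpha>, \<beta>)})" for \<alpha> \<beta>
  proof -
    have "{v\<in>l. A v = \<alpha> \<and> B v = \<beta>} = par ` (\<psi> -` {(\<alpha>, \<beta>)})"
      using bij by (auto simp: \<psi>_def bij_betw_def)
    moreover have "inj par" using bij by (simp add: bij_betw_def)
    ultimately show ?thesis by (simp add: card_image inj_on_subset)
  qed
  have "\<psi> (p + p') = \<psi> p + \<psi> p'" for p p'
    using A B uw(4) by (simp add: \<psi>_def par_def iso_additive_def)
  thus ?thesis unfolding fibre by (rule card_fibres_additive)
qed

lemma fibre_sums_line_combination: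
  fixes f A B :: "(nat \<Rightarrow> 'k) \<Rightarrow> 'k"
  assumes f: "\<And>v. v \<in> Vec \<Longrightarrow> f v = (\<Sum>l\<in>Lines. a l * (if v \<in> l then 1 else 0))"
    and A: "iso_additive A" and B: "iso_additive B"
  shows "(\<Sum>v\<in>{v\<in>Vec. A v = \<alpha> \<and> B v = \<beta>}. f v) = (\<Sum>v\<in>{v\<in>Vec. A v = \<alpha>' \<and> B v = \<beta>'}. f v)"
proof -
  have fibre_sum: "(\<Sum>v\<in>{v\<in>Vec. A v = \<alpha> \<and> B v = \<beta>}. f v)
      = (\<Sum>l\<in>Lines. a l * of_nat (card {v\<in>l. A v = \<alpha> \<and> B v = \<beta>}))" for \<alpha> \<beta>
  proof -
    let ?S = "{v\<in>Vec. A v = \<alpha> \<and> B v = \<beta>}"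
    have fin: "finite ?S" using finite_Vec by simp
    have "(\<Sum>v\<in>?S. f v) = (\<Sum>v\<in>?S. \<Sum>l\<in>Lines. a l * of_bool (v \<in> l))"
      using f by (intro sum.cong) (auto simp: of_bool_def)
    also have "\<dots> = (\<Sum>l\<in>Lines. a l * (\<Sum>v\<in>?S. of_bool (v \<in> l)))"
      by (subst sum.swap) (simp add: sum_distrib_left)
    also have "\<dots> = (\<Sum>l\<in>Lines. a l * of_nat (card {v\<in>l. A v = \<alpha> \<and> B v = \<beta>}))"
    proof (rule sum.cong)
      fix l :: "(nat \<Rightarrow> 'k) set" assume "l \<in> Lines"
      hence "?S \<inter> {v. v \<in> l} = {v\<in>l. A v = \<alpha> \<and> B v = \<beta>}" using Lines_subset_Vec by blast
      thus "a l * (\<Sum>v\<in>?S. of_bool (v \<in> l)) = a l * of_nat (card {v\<in>l. A v = \<alpha> \<and> B v = \<beta>})"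
        using fin by simp
    qed simp
    finally show ?thesis .
  qed
  show ?thesis unfolding fibre_sum
  proof (rule sum.cong[OF refl])
    fix l :: "(nat \<Rightarrow> 'k) set" assume "l \<in> Lines"
    thus "a l * of_nat (card {v\<in>l. A v = \<alpha> \<and> B v = \<beta>})
        = a l * of_nat (card {v\<in>l. A v = \<alpha>' \<and> B v = \<beta>'})"
      using card_line_fibres[OF _ A B, of l \<alpha> \<beta> \<alpha>' \<beta>'] by simp
  qed
qed

end

section \<open>Explicit lines in the hyperplane \<open>x\<^sub>3 = 0\<close>\<close>

definition vec4 :: "'k \<Rightarrow> 'k \<Rightarrow> 'k \<Rightarrow> 'k \<Rightarrow> nat \<Rightarrow> 'k::zero" where
  "vec4 a b c d = (\<lambda>i. if i = 0 then a else if i = 1 then b else if i = 2 then c else if i = 3 then d else 0)"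

lemma vec4_simps [simp]:
  "vec4 a b c d 0 = a" "vec4 a b c d (Suc 0) = b" "vec4 a b c d 1 = b"
  "vec4 a b c d (Suc (Suc 0)) = c" "vec4 a b c d 2 = c"
  "vec4 a b c d (Suc (Suc (Suc 0))) = d" "vec4 a b c d 3 = d"
  by (simp_all add: vec4_def)

lemma vec4_in_Vec [simp]: "vec4 a b c d \<in> Vec"
  by (auto simp: Vec_def vec4_def)

lemma vec4_eq_Vec_iff:
  assumes "v \<in> Vec"
  shows "vec4 a b c d = v \<longleftrightarrow> a = v 0 \<and> b = v 1 \<and> c = v 2 \<and> d = v 3"
proof
  assume "a = v 0 \<and> b = v 1 \<and> c = v 2 \<and> d = v 3"
  thus "vec4 a b c d = v" using assms by (auto simp: Vec_def vec4_def fun_eq_iff)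
qed auto

context binary_field
begin

lemma plane_coords:
  fixes p1 p2 w1 w2 c d :: 'k
  assumes hw: "w1 * p1 + w2 * p2 = 1"
  shows "(p2 * c + p1 * d) * w2 + (w1 * c + w2 * d) * p1 = c"
    and "(p2 * c + p1 * d) * w1 + (w1 * c + w2 * d) * p2 = d"
proof -
  have "(p2 * c + p1 * d) * w2 + (w1 * c + w2 * d) * p1 = c * (w1 * p1 + w2 * p2)"
    by (simp add: algebra_simps)
  thus "(p2 * c + p1 * d) * w2 + (w1 * c + w2 * d) * p1 = c" using hw by simp
  have "(p2 * c + p1 * d) * w1 + (w1 * c + w2 * d) * p2 = d * (w1 * p1 + w2 * p2)"
    by (simp add: algebra_simps)
  thus "(p2 * c + p1 * d) * w1 + (w1 * c + w2 * d) * p2 = d" using hw by simp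
qed

lemma plane_forms:
  fixes p1 p2 w1 w2 b y :: 'k
  assumes hw: "w1 * p1 + w2 * p2 = 1"
  shows "p2 * (b * w2 + y * p1) + p1 * (b * w1 + y * p2) = b"
    and "w1 * (b * w2 + y * p1) + w2 * (b * w1 + y * p2) = y"
proof -
  have "p2 * (b * w2 + y * p1) + p1 * (b * w1 + y * p2) = b * (w1 * p1 + w2 * p2)"
    by (simp add: algebra_simps)
  thus "p2 * (b * w2 + y * p1) + p1 * (b * w1 + y * p2) = b" using hw by simp
  have "w1 * (b * w2 + y * p1) + w2 * (b * w1 + y * p2) = y * (w1 * p1 + w2 * p2)"
    by (simp add: algebra_simps)
  thus "w1 * (b * w2 + y * p1) + w2 * (b * w1 + y * p2) = y" using hw by simp
qed

lemma plane_line_bij: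
  fixes p1 p2 w1 w2 b b' :: 'k
  assumes hw: "w1 * p1 + w2 * p2 = 1"
  shows "bij_betw (\<lambda>y. vec4 (b * y) (b' * w2 + y * p1) (b' * w1 + y * p2) 0) UNIV
     {v\<in>Vec. v 3 = 0 \<and> p2 * v 1 + p1 * v 2 = b' \<and> v 0 = b * (w1 * v 1 + w2 * v 2)}"
proof -
  let ?f = "\<lambda>y. vec4 (b * y) (b' * w2 + y * p1) (b' * w1 + y * p2) (0 :: 'k)"
  let ?g = "\<lambda>v. w1 * v 1 + w2 * v 2"
  let ?S = "{v\<in>Vec. v 3 = 0 \<and> p2 * v 1 + p1 * v 2 = b' \<and> v 0 = b * (w1 * v 1 + w2 * v 2)}"
  have left: "\<forall>y\<in>UNIV. ?g (?f y) = y" using plane_forms(2)[OF hw] by simp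
  have right: "\<forall>v\<in>?S. ?f (?g v) = v"
  proof
    fix v assume "v \<in> ?S"
    hence v: "v \<in> Vec" "v 3 = 0" "p2 * v 1 + p1 * v 2 = b'" "v 0 = b * (w1 * v 1 + w2 * v 2)"
      by simp_all
    show "?f (?g v) = v"
      using v plane_coords[OF hw, where c = "v 1" and d = "v 2"] by (simp add: vec4_eq_Vec_iff)
  qed
  have image: "?f ` UNIV \<subseteq> ?S" using plane_forms[OF hw] by auto
  show ?thesis by (rule bij_betw_byWitness[OF left right image]) simp
qed

lemma plane_quadric_fibre:
  fixes p1 p2 w1 w2 s b :: 'k
  assumes hw: "w1 * p1 + w2 * p2 = 1" and hs: "s * s = p1 * p2"
  shows "{v\<in>Vec. v 3 = 0 \<and> p2 * v 1 + p1 * v 2 = b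
            \<and> quadform v + (s * (w1 * v 1 + w2 * v 2)) ^ 2 + v 0 = b * b * (w1 * w2)}
       = {v\<in>Vec. v 3 = 0 \<and> p2 * v 1 + p1 * v 2 = b \<and> v 0 = b * (w1 * v 1 + w2 * v 2)}"
proof -
  have quadric: "quadform v + (s * (w1 * v 1 + w2 * v 2)) ^ 2 + v 0 = b * b * (w1 * w2)
      \<longleftrightarrow> v 0 = b * (w1 * v 1 + w2 * v 2)"
    if "v 3 = 0" "p2 * v 1 + p1 * v 2 = b" for v :: "nat \<Rightarrow> 'k"
  proof -
    define y where "y = w1 * v 1 + w2 * v 2"
    have v12: "v 1 = b * w2 + y * p1" "v 2 = b * w1 + y * p2"
      using that(2) plane_coords[OF hw, where c = "v 1" and d = "v 2"] by (simp_all add: y_def)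
    have "quadform v + (s * y) ^ 2
        = b * b * (w1 * w2) + b * y * (w1 * p1 + w2 * p2) + y * y * (p1 * p2 + s * s)"
      unfolding quadform_def that(1) v12 by (simp add: algebra_simps power2_eq_square)
    also have "\<dots> = b * b * (w1 * w2) + b * y" using hw hs by simp
    finally have "quadform v + (s * y) ^ 2 + v 0 = b * b * (w1 * w2) \<longleftrightarrow> b * y + v 0 = 0"
      by (simp add: add.assoc)
    also have "\<dots> \<longleftrightarrow> v 0 = b * y" by (metis add_eq_0_iff_eq)
    finally show ?thesis by (simp add: y_def)
  qed
  show ?thesis
    by (rule Collect_cong) (use quadric in blast)
qed

end

section \<open>Functions whose fibre sums are balanced\<close>

locale balanced_function = binary_field q field_type t
  for q and field_type :: "'k::field itself" and t +
  fixes F :: "(nat \<Rightarrow> 'k) \<Rightarrow> 'k"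
  assumes homogeneous: "c \<noteq> 0 \<Longrightarrow> F (\<lambda>i. c * v i) = F v"
    and vanishes_off_plane: "v \<in> Vec \<Longrightarrow> v 3 \<noteq> 0 \<Longrightarrow> F v = 0"
    and fibre_sums_equal: "iso_additive A \<Longrightarrow> iso_additive B \<Longrightarrow>
      (\<Sum>v\<in>{v\<in>Vec. A v = \<alpha> \<and> B v = \<beta>}. F v) = (\<Sum>v\<in>{v\<in>Vec. A v = \<alpha>' \<and> B v = \<beta>'}. F v)"
begin

abbreviation G :: "'k \<Rightarrow> 'k \<Rightarrow> 'k \<Rightarrow> 'k" where
  "G x0 x1 x2 \<equiv> F (vec4 x0 x1 x2 0)"

text \<open>Since \<open>F\<close> vanishes off the hyperplane, the balance holds for fibres inside \<open>x\<^sub>3 = 0\<close>.\<close>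
lemma plane_fibre_sums_equal:
  assumes "iso_additive A" "iso_additive B"
  shows "(\<Sum>v\<in>{v\<in>Vec. v 3 = 0 \<and> A v = \<alpha> \<and> B v = \<beta>}. F v)
       = (\<Sum>v\<in>{v\<in>Vec. v 3 = 0 \<and> A v = \<alpha>' \<and> B v = \<beta>'}. F v)"
proof -
  have restrict: "(\<Sum>v\<in>{v\<in>Vec. A v = \<alpha> \<and> B v = \<beta>}. F v) = (\<Sum>v\<in>{v\<in>Vec. v 3 = 0 \<and> A v = \<alpha> \<and> B v = \<beta>}. F v)"
    for \<alpha> \<beta> using finite_Vec by (intro sum.mono_neutral_right) (auto intro: vanishes_off_plane)
  show ?thesis using fibre_sums_equal[OF assms] unfolding restrict .
qed

lemma param_fibre_sums_equal:
  assumes "iso_additive A" "iso_additive B"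
    and "bij_betw P UNIV {v\<in>Vec. v 3 = 0 \<and> A v = \<alpha> \<and> B v = \<beta>}"
    and "bij_betw P' UNIV {v\<in>Vec. v 3 = 0 \<and> A v = \<alpha>' \<and> B v = \<beta>'}"
  shows "(\<Sum>y\<in>UNIV. F (P y)) = (\<Sum>y\<in>UNIV. F (P' y))"
  using plane_fibre_sums_equal[OF assms(1,2)]
  unfolding sum.reindex_bij_betw[OF assms(3)] sum.reindex_bij_betw[OF assms(4)] .

text \<open>Summing \<open>G\<close> along a line through the origin: all nonzero points contribute the same
  value, and there are \<open>q - 1 = 1\<close> of them in \<open>k\<close>.\<close>
lemma sum_G_line:
  "(\<Sum>y\<in>UNIV. G (\<beta> * y) (y * p1) (y * p2)) = G 0 0 0 + G \<beta> p1 p2"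
proof -
  let ?U = "UNIV - {0 :: 'k}"
  have "(\<Sum>y\<in>UNIV. G (\<beta> * y) (y * p1) (y * p2)) = G 0 0 0 + (\<Sum>y\<in>?U. G (\<beta> * y) (y * p1) (y * p2))"
    using finite_UNIV_field by (subst sum.remove[of _ 0]) auto
  also have "(\<Sum>y\<in>?U. G (\<beta> * y) (y * p1) (y * p2)) = (\<Sum>y\<in>?U. G \<beta> p1 p2)"
  proof (rule sum.cong)
    fix y assume "y \<in> ?U"
    moreover have "vec4 (\<beta> * y) (y * p1) (y * p2) 0 = (\<lambda>i. y * vec4 \<beta> p1 p2 0 i)"
      by (auto simp: vec4_def fun_eq_iff)
    ultimately show "G (\<beta> * y) (y * p1) (y * p2) = G \<beta> p1 p2" by (simp add: homogeneous)
  qed simp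
  also have "\<dots> = G \<beta> p1 p2"
    using card_UNIV_field finite_UNIV_field of_nat_card_minus_1_eq_1 by (simp add: card_Diff_singleton)
  finally show ?thesis .
qed

text \<open>Comparing the quadric fibres for \<open>b = 0, \<beta>\<close> and then linear fibres shows that the sum
  of \<open>G\<close> along the line through \<open>(\<beta>, p\<^sub>1, p\<^sub>2)\<close> does not depend on \<open>\<beta>\<close>.\<close>
lemma G_indep_x0_nonzero:
  assumes p: "p1 \<noteq> 0 \<or> p2 \<noteq> 0"
  shows "G \<beta> p1 p2 = G 0 p1 p2"
proof -
  obtain w1 w2 where hw: "w1 * p1 + w2 * p2 = 1"
  proof (cases "p1 = 0")
    case True thus ?thesis using p that[of 0 "1 / p2"] by simp
  next
    case False thus ?thesis using that[of "1 / p1" 0] by simp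
  qed
  obtain s where hs: "s * s = p1 * p2" using exists_sqrt by blast
  let ?L = "\<lambda>b b' y. vec4 (b * y) (b' * w2 + y * p1) (b' * w1 + y * p2) (0 :: 'k)"
  have bij_quadric: "bij_betw (?L b b) UNIV {v\<in>Vec. v 3 = 0 \<and> p2 * v 1 + p1 * v 2 = b
      \<and> quadform v + (s * (w1 * v 1 + w2 * v 2)) ^ 2 + v 0 = b * b * (w1 * w2)}" for b
    unfolding plane_quadric_fibre[OF hw hs] by (rule plane_line_bij[OF hw])
  have bij_linear: "bij_betw (?L \<beta> b') UNIV {v\<in>Vec. v 3 = 0 \<and> p2 * v 1 + p1 * v 2 = b'
      \<and> v 0 + \<beta> * (w1 * v 1 + w2 * v 2) = 0}" for b'
    unfolding add_eq_0_iff_eq by (rule plane_line_bij[OF hw])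
  have "(\<Sum>y\<in>UNIV. F (?L 0 0 y)) = (\<Sum>y\<in>UNIV. F (?L \<beta> \<beta> y))"
    by (rule param_fibre_sums_equal[OF _ _ bij_quadric bij_quadric]; intro iso_additive_intros)
  also have "\<dots> = (\<Sum>y\<in>UNIV. F (?L \<beta> 0 y))"
    by (rule param_fibre_sums_equal[OF _ _ bij_linear bij_linear]; intro iso_additive_intros)
  finally have "(\<Sum>y\<in>UNIV. G (0 * y) (y * p1) (y * p2)) = (\<Sum>y\<in>UNIV. G (\<beta> * y) (y * p1) (y * p2))"
    by simp
  thus ?thesis unfolding sum_G_line by simp
qed

text \<open>On the \<open>x\<^sub>0\<close>-axis we compare with the parallel line through \<open>(0, 1, 0)\<close>, where \<open>G\<close> is
  already known to be constant.\<close>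
lemma G_indep_x0_axis: "G \<beta> 0 0 = G 0 0 0"
proof -
  have bij: "bij_betw (\<lambda>y. vec4 y c 0 0) UNIV {v\<in>Vec. v 3 = 0 \<and> v 1 = c \<and> v 2 = 0}" for c :: 'k
    by (rule bij_betw_byWitness[where f' = "\<lambda>v. v 0"]) (auto simp: vec4_eq_Vec_iff)
  have "(\<Sum>y\<in>UNIV. G y 0 0) = (\<Sum>y\<in>UNIV. G y 1 0)"
    by (rule param_fibre_sums_equal[OF _ _ bij bij]; intro iso_additive_intros)
  also have "\<dots> = (\<Sum>y\<in>(UNIV :: 'k set). G 0 1 0)"
    by (intro sum.cong refl G_indep_x0_nonzero) simp
  also have "\<dots> = 0" using card_UNIV_field of_nat_card_eq_0 by simp
  finally have "(\<Sum>y\<in>UNIV. G (1 * y) (y * 0) (y * 0)) = 0" by simp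
  hence "G 0 0 0 + G 1 0 0 = 0" unfolding sum_G_line .
  hence G1: "G 1 0 0 = G 0 0 0" by (simp add: add_eq_0_iff_eq)
  show ?thesis
  proof (cases "\<beta> = 0")
    case False
    have "vec4 \<beta> 0 0 0 = (\<lambda>i. \<beta> * vec4 1 0 0 0 i)" by (auto simp: vec4_def fun_eq_iff)
    thus ?thesis using G1 homogeneous[OF False] by simp
  qed simp
qed

lemma G_indep_x0: "G x0 x1 x2 = G 0 x1 x2"
proof (cases "x1 = 0 \<and> x2 = 0")
  case True thus ?thesis using G_indep_x0_axis[of x0] by simp
next
  case False thus ?thesis by (intro G_indep_x0_nonzero) simp
qed

text \<open>The sum of \<open>G\<close> over the plane \<open>x\<^sub>0 = x\<^sub>3 = 0\<close> equals the sum of \<open>F\<close> over \<open>x\<^sub>0 = 0, x\<^sub>3 = 1\<close>,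
  which vanishes.\<close>
lemma sum_G_plane: "(\<Sum>x1\<in>UNIV. \<Sum>x2\<in>UNIV. G 0 x1 x2) = 0"
proof -
  have bij: "bij_betw (\<lambda>p. vec4 0 (fst p) (snd p) 0) UNIV {v\<in>Vec. v 0 = 0 \<and> v 3 = 0}"
    by (rule bij_betw_byWitness[where f' = "\<lambda>v. (v 1, v 2)"]) (auto simp: vec4_eq_Vec_iff)
  have "(\<Sum>x1\<in>UNIV. \<Sum>x2\<in>UNIV. G 0 x1 x2) = (\<Sum>p\<in>UNIV \<times> UNIV. G 0 (fst p) (snd p))"
    unfolding sum.cartesian_product by (simp add: split_def)
  also have "\<dots> = (\<Sum>v\<in>{v\<in>Vec. v 0 = 0 \<and> v 3 = 0}. F v)"
    using sum.reindex_bij_betw[OF bij, of F] by simp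
  also have "\<dots> = (\<Sum>v\<in>{v\<in>Vec. v 0 = 0 \<and> v 3 = 1}. F v)"
    by (rule fibre_sums_equal; intro iso_additive_intros)
  also have "\<dots> = 0" by (intro sum.neutral) (auto intro: vanishes_off_plane)
  finally show ?thesis .
qed

end

section \<open>Coefficients of reduced polynomials\<close>

lemma mon_eval_upd_zero:
  assumes "i < 4"
  shows "mon_eval m (v(i := 0)) = (if m i = 0 then mon_eval m v else (0 :: 'k::field))"
proof (cases "m i = 0")
  case True
  thus ?thesis unfolding mon_eval_def by (auto intro: prod.cong)
next
  case False
  thus ?thesis using assms unfolding mon_eval_def by (auto intro!: prod_zero bexI[of _ i])
qed

lemma evalp_upd_zero:
  "i < 4 \<Longrightarrow> evalp q c (v(i := 0)) = evalp q (\<lambda>m. if m i = 0 then c m else 0) (v :: nat \<Rightarrow> 'k::field)"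
  unfolding evalp_mon_eval by (intro sum.cong) (auto simp: mon_eval_upd_zero)

lemma evalp_mult_x3:
  assumes "v 3 = 0" "q \<ge> 2"
  shows "evalp q (mult_x3 q h) v = evalp q h (v :: nat \<Rightarrow> 'k::field)"
proof -
  have "mon_eval m v = 0" if "q - 1 \<le> m 3" for m
  proof -
    have "m 3 \<noteq> 0" using that assms(2) by linarith
    thus ?thesis using mon_eval_upd_zero[of 3 m v] assms(1) by (simp add: fun_upd_idem)
  qed
  thus ?thesis by (auto simp: evalp_mon_eval mult_x3_def distrib_right intro!: sum.cong)
qed

lemma exponents_eqI:
  fixes m m' :: "nat \<Rightarrow> nat"
  assumes "\<forall>i\<ge>4. m i = 0" "\<forall>i\<ge>4. m' i = 0"
    and "m 0 = m' 0" "m 1 = m' 1" "m 2 = m' 2" "m 3 = m' 3"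
  shows "m = m'"
proof
  fix i show "m i = m' i"
    using assms by (cases "i < 4") (auto simp: numeral_eq_Suc less_Suc_eq)
qed

definition top12 :: "nat \<Rightarrow> nat \<Rightarrow> nat" where
  "top12 q = (\<lambda>i. if i = 1 \<or> i = 2 then q - 1 else 0)"

context finite_field
begin

lemma coeff_eq_0_of_indep:
  fixes c :: "(nat \<Rightarrow> nat) \<Rightarrow> 'k"
  assumes red: "reduced q c" and i: "i < 4"
    and indep: "\<And>v. v \<in> Vec \<Longrightarrow> evalp q c (v(i := 0)) = evalp q c v"
    and "c m \<noteq> 0"
  shows "m i = 0"
proof -
  let ?c' = "\<lambda>m. if m i = 0 then c m else 0"
  have "evalp q ?c' v = evalp q c v" if "v \<in> Vec" for v
    using evalp_upd_zero[OF i, where c = c and v = v] indep[OF that] by (rule trans[OF sym])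
  moreover have "reduced q ?c'" using red by (auto simp: reduced_def)
  ultimately have "?c' = c" using reduced_eval_inj[OF _ red] by blast
  thus ?thesis using fun_cong[of ?c' c m] \<open>c m \<noteq> 0\<close> by (auto split: if_splits)
qed

text \<open>Elements of \<open>R\<^sub>P\<^sup>*\<close> are homogeneous of degree divisible by \<open>q - 1\<close>, so their values are
  invariant under nonzero scalars, i.e.\ they are functions on points.\<close>
lemma evalp_homogeneous:
  assumes c: "c \<in> RPstar q" and a: "a \<noteq> 0"
  shows "evalp q c (\<lambda>i. a * v i) = evalp q c (v :: nat \<Rightarrow> 'k)"
proof -
  have termwise: "c m * mon_eval m (\<lambda>i. a * v i) = c m * mon_eval m v" for m
  proof (cases "c m = 0")
    case False
    then obtain j where j: "(\<Sum>i<4. m i) = (q - 1) * j" using c by (auto simp: RPstar_def)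
    have "mon_eval m (\<lambda>i. a * v i) = a ^ (\<Sum>i<4. m i) * mon_eval m v"
      by (simp add: mon_eval_def power_mult_distrib prod.distrib power_sum)
    also have "a ^ (\<Sum>i<4. m i) = 1" using j power_card_minus_1[OF a] by (simp add: power_mult)
    finally show ?thesis by simp
  qed simp
  show ?thesis by (simp add: evalp_mon_eval termwise)
qed

lemma sum_plane_evalp:
  assumes red: "reduced q c"
  shows "(\<Sum>x1\<in>UNIV. \<Sum>x2\<in>UNIV. evalp q c (vec4 0 x1 x2 (0 :: 'k))) = c (top12 q)"
proof -
  have weight: "(\<Sum>x1\<in>UNIV. \<Sum>x2\<in>UNIV. mon_eval m (vec4 0 x1 x2 (0 :: 'k)))
      = (if m = top12 q then 1 else 0)" if m: "m \<in> Mon q" for m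
  proof -
    have "(\<Sum>x1\<in>UNIV. \<Sum>x2\<in>UNIV. mon_eval m (vec4 0 x1 x2 (0 :: 'k)))
        = (\<Sum>x1\<in>UNIV. \<Sum>x2\<in>UNIV. 0 ^ m 0 * 0 ^ m 3 * (x1 ^ m 1 * x2 ^ m 2))"
      by (simp add: mon_eval_4 mult_ac)
    also have "\<dots> = 0 ^ m 0 * 0 ^ m 3 * ((\<Sum>x1\<in>UNIV. x1 ^ m 1) * (\<Sum>x2\<in>UNIV. x2 ^ m 2))"
      by (simp only: sum_distrib_left[symmetric] sum_distrib_right[symmetric])
    also have "\<dots> = 0 ^ m 0 * 0 ^ m 3 * (psum q (m 1) * psum q (m 2))"
      by (simp add: sum_powers)
    also have "\<dots> = (if m = top12 q then 1 else 0)"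
    proof -
      have "m 1 < q" "m 2 < q" using m unfolding Mon_def by auto
      hence "m 1 \<le> 2 * (q - 1)" "m 2 \<le> 2 * (q - 1)" "m 1 \<le> q - 1" "m 2 \<le> q - 1" by auto
      moreover have "m = top12 q \<longleftrightarrow> m 0 = 0 \<and> m 3 = 0 \<and> m 1 = q - 1 \<and> m 2 = q - 1"
        using m by (auto simp: Mon_def top12_def intro!: exponents_eqI)
      ultimately show ?thesis using card_ge_2 by (auto simp: psum_le_twice)
    qed
    finally show ?thesis .
  qed
  have "(\<Sum>x1\<in>UNIV. \<Sum>x2\<in>UNIV. evalp q c (vec4 0 x1 x2 (0 :: 'k)))
      = (\<Sum>m\<in>Mon q. c m * (\<Sum>x1\<in>UNIV. \<Sum>x2\<in>UNIV. mon_eval m (vec4 0 x1 x2 (0 :: 'k))))"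
    by (simp add: evalp_mon_eval sum_distrib_left sum.swap[of _ "Mon q"])
  also have "\<dots> = (\<Sum>m\<in>Mon q. if m = top12 q then c m else 0)"
    by (rule sum.cong) (simp_all add: weight)
  also have "\<dots> = c (top12 q)"
    using finite_Mon card_ge_2 by (auto simp: Mon_def top12_def)
  finally show ?thesis .
qed

end

section \<open>The monomials \<open>g\<^sub>0 g\<^sub>1\<^sup>2 \<cdots> g\<^sub>t\<^sub>-\<^sub>1\<^sup>2\<^sup>t\<^sup>-\<^sup>1\<close>\<close>

lemma gmon_binary_digits:
  fixes a :: nat
  assumes "a < 2 ^ t"
  defines "g \<equiv> \<lambda>i. if bit a i then 1 else (2 :: nat)"
  shows "gmon t g 1 = a" and "gmon t g 2 = 2 ^ t - 1 - a" and "j \<notin> {1, 2} \<Longrightarrow> gmon t g j = 0"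
proof -
  have "a = take_bit t a" using assms(1) by (metis take_bit_nat_eq_self_iff)
  also have "\<dots> = (\<Sum>i<t. if bit a i then 2 ^ i else 0)"
    unfolding take_bit_sum atLeast0LessThan by (intro sum.cong) (simp_all add: push_bit_eq_mult)
  also have "\<dots> = gmon t g 1" unfolding gmon_def g_def by (intro sum.cong) auto
  finally show one: "gmon t g 1 = a" ..
  have "gmon t g 1 + gmon t g 2 = (\<Sum>i<t. 2 ^ i)"
    unfolding gmon_def sum.distrib[symmetric] by (intro sum.cong) (auto simp: g_def)
  also have "\<dots> = 2 ^ t - 1" using mask_eq_sum_exp[where 'a = nat, of t] by (simp add: lessThan_def)
  finally show "gmon t g 2 = 2 ^ t - 1 - a" using one by simp
  show "j \<notin> {1, 2} \<Longrightarrow> gmon t g j = 0" unfolding gmon_def g_def by (intro sum.neutral) auto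
qed

context binary_field
begin

lemma monomial_in_gmons:
  assumes m: "m \<in> Mon q" and m03: "m 0 = 0" "m 3 = 0"
    and dvd: "(q - 1) dvd (\<Sum>i<4. m i)" and top: "m \<noteq> top12 q"
  shows "m \<in> insert (\<lambda>_. 0) (gmons t)"
proof -
  have "m 1 < q" "m 2 < q" and high: "\<forall>i\<ge>4. m i = 0" using m unfolding Mon_def by auto
  moreover have "(\<Sum>i<4. m i) = m 1 + m 2" using m03 by (simp add: eval_nat_numeral)
  ultimately obtain j where j: "m 1 + m 2 = (q - 1) * j" using dvd by auto
  have "j < 2"
  proof (rule ccontr)
    assume "\<not> j < 2"
    hence "(q - 1) * 2 \<le> m 1 + m 2" unfolding j by (intro mult_le_mono2) simp
    hence "m = top12 q"
      using \<open>m 1 < q\<close> \<open>m 2 < q\<close> high m03 by (intro exponents_eqI) (auto simp: top12_def)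
    thus False using top by contradiction
  qed
  then consider "j = 0" | "j = 1" by linarith
  thus ?thesis
  proof cases
    case 1
    hence "m = (\<lambda>_. 0)" using j high m03 by (intro exponents_eqI) auto
    thus ?thesis by simp
  next
    case 2
    define g where "g = (\<lambda>i. if bit (m 1) i then 1 else (2 :: nat))"
    have "m 1 < 2 ^ t" using \<open>m 1 < q\<close> card_pow2 by simp
    note gmon = gmon_binary_digits[OF this, folded g_def, simplified]
    have "m = gmon t g"
      using j 2 high m03 card_pow2 by (intro exponents_eqI) (auto simp: gmon)
    moreover have "\<forall>i<t. g i \<in> {1, 2}" by (simp add: g_def)
    ultimately show ?thesis by (auto simp: gmons_def)
  qed
qed

end

context balanced_function
begin

text \<open>A polynomial in \<open>x\<^sub>0, x\<^sub>1, x\<^sub>2\<close> from \<open>R\<^sub>P\<^sup>*\<close> whose values on the hyperplane \<open>x\<^sub>3 = 0\<close> are those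
  of \<open>F\<close> involves only \<open>1\<close> and the monomials \<open>g\<^sub>0 g\<^sub>1\<^sup>2 \<cdots> g\<^sub>t\<^sub>-\<^sub>1\<^sup>2\<^sup>t\<^sup>-\<^sup>1\<close>: it cannot involve \<open>x\<^sub>0\<close>
  because \<open>G\<close> does not depend on \<open>x\<^sub>0\<close>, and the coefficient of \<open>x\<^sub>1\<^sup>q\<^sup>-\<^sup>1x\<^sub>2\<^sup>q\<^sup>-\<^sup>1\<close> is the sum of \<open>G\<close>
  over the plane \<open>x\<^sub>0 = x\<^sub>3 = 0\<close>, which vanishes.\<close>
lemma support_of_plane_restriction:
  assumes h: "h \<in> RPstar q" and no_x3: "\<forall>m. h m \<noteq> 0 \<longrightarrow> m 3 = 0"
    and agree: "\<And>v. v \<in> Vec \<Longrightarrow> v 3 = 0 \<Longrightarrow> evalp q h v = F v"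
    and "h m \<noteq> 0"
  shows "m \<in> insert (\<lambda>_. 0) (gmons t)"
proof -
  have red: "reduced q h" using h by (simp add: RPstar_def)
  have no_x3_eval: "evalp q h (v(3 := 0)) = evalp q h v" for v
  proof -
    have "(\<lambda>m. if m 3 = 0 then h m else 0) = h" by (rule ext) (use no_x3 in auto)
    thus ?thesis by (simp add: evalp_upd_zero)
  qed
  have eval_G: "evalp q h v = G (v 0) (v 1) (v 2)" if "v \<in> Vec" for v
  proof -
    have "v(3 := 0) \<in> Vec" "vec4 (v 0) (v 1) (v 2) 0 = v(3 := 0)"
      using that by (auto simp: Vec_def vec4_eq_Vec_iff)
    thus ?thesis using agree[of "v(3 := 0)"] no_x3_eval by simp
  qed
  have indep_x0: "evalp q h (v(0 := 0)) = evalp q h v" if "v \<in> Vec" for v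
  proof -
    have "v(0 := 0) \<in> Vec" using that by (auto simp: Vec_def)
    hence "evalp q h (v(0 := 0)) = G 0 (v 1) (v 2)" by (simp add: eval_G)
    also have "\<dots> = G (v 0) (v 1) (v 2)" by (rule G_indep_x0[symmetric])
    finally show ?thesis using eval_G[OF that] by simp
  qed
  have "m 0 = 0"
    using coeff_eq_0_of_indep[where i = 0 and c = h and m = m] red indep_x0 \<open>h m \<noteq> 0\<close> by simp
  moreover have "h (top12 q) = 0"
    using sum_plane_evalp[OF red] sum_G_plane by (simp add: agree)
  moreover have "m \<in> Mon q" "(q - 1) dvd (\<Sum>i<4. m i)"
    using h \<open>h m \<noteq> 0\<close> by (auto simp: RPstar_def reduced_def)
  ultimately show ?thesis
    using monomial_in_gmons no_x3 \<open>h m \<noteq> 0\<close> by (metis (mono_tags))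
qed

end

theorem lemma11:
  fixes r h :: "(nat \<Rightarrow> nat) \<Rightarrow> 'k::field"
    and q t :: nat
  assumes card: "finite (UNIV :: 'k set)" "card (UNIV :: 'k set) = q" "q = 2 ^ t"
    and r_RP: "r \<in> RPstar q"
    and r_C: "\<exists>a :: (nat \<Rightarrow> 'k) set \<Rightarrow> 'k.
                r = (\<lambda>m. \<Sum>l\<in>(Lines :: (nat \<Rightarrow> 'k) set set). a l * deltastar q l m)"
    and r_ker: "\<forall>v\<in>Vec. v 3 \<noteq> 0 \<longrightarrow> evalp q r v = 0"
    and h_RP: "h \<in> RPstar q"
    and h_no_x3: "\<forall>m. h m \<noteq> 0 \<longrightarrow> m 3 = 0"
    and fact: "r = mult_x3 q h"
  shows "\<exists>b :: (nat \<Rightarrow> nat) \<Rightarrow> 'k.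
           \<forall>m. h m = (if m \<in> insert (\<lambda>_. 0) (gmons t) then b m else 0)"
proof -
  obtain a :: "(nat \<Rightarrow> 'k) set \<Rightarrow> 'k"
    where r_lines: "r = (\<lambda>m. \<Sum>l\<in>Lines. a l * deltastar q l m)" using r_C by blast
  interpret binary_field q "TYPE('k)" t using card by unfold_locales
  text \<open>The values of \<open>r\<close> form a line combination, so they are balanced on fibres.\<close>
  have r_values: "evalp q r v = (\<Sum>l\<in>Lines. a l * (if v \<in> l then 1 else 0))" if "v \<in> Vec" for v
    using that by (simp add: r_lines evalp_linear_combination deltastar_spec)
  interpret balanced_function q "TYPE('k)" t "evalp q r"
  proof
    show "evalp q r (\<lambda>i. c * v i) = evalp q r v" if "c \<noteq> 0" for c v
      by (rule evalp_homogeneous[OF r_RP that])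
    show "evalp q r v = 0" if "v \<in> Vec" "v 3 \<noteq> 0" for v using r_ker that by blast
    show "(\<Sum>v\<in>{v\<in>Vec. A v = \<alpha> \<and> B v = \<beta>}. evalp q r v) = (\<Sum>v\<in>{v\<in>Vec. A v = \<alpha>' \<and> B v = \<beta>'}. evalp q r v)"
      if "iso_additive A" "iso_additive B" for A B \<alpha> \<beta> \<alpha>' \<beta>'
      using fibre_sums_line_combination[OF r_values that] .
  qed
  have agree: "evalp q h v = evalp q r v" if "v \<in> Vec" "v 3 = 0" for v
    using evalp_mult_x3[where v = v, OF that(2) card_ge_2] fact by simp
  show ?thesis
    using support_of_plane_restriction[OF h_RP h_no_x3 agree] by (intro exI[of _ h]) auto
qed

end
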